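(* Let $\mathcal X_1=(\Omega_1,S_1)$, $\mathcal X_2=(\Omega_2,S_2)$ be coherent configurations, $\mathcal X=\mathcal X_1\wr\mathcal X_2$ on $\Omega=\Omega_1\times\Omega_2$, and $\Pi\subseteq 2^\Omega$. Suppose that (1) for every $a\in\Omega_2$ the family $\Pi_a=\{\Gamma\cap\Omega_a:\Gamma\in\Pi\}$ is a generalized base of $\mathcal X_{\Omega_a}$, and (2) the family $\{\pi(\Gamma):\Gamma\in\Pi\}$ is a generalized base of $\mathcal X_2$, where $\pi:\Omega\to\Omega_2$ is the projection. Then $\Pi$ is a generalized base of $\mathcal X$.
   Context: A coherent configuration on a finite set $\Omega$ is $\mathcal X=(\Omega,S)$ with $S$ a partition of $\Omega\times\Omega$ such that $1_\Omega$ is a union of elements of $S$, $s^*=\{(\beta,\alpha):(\alpha,\beta)\in s\}\in S$ for $s\in S$, and for $r,s,t\in S$ the number $|\{\gamma:(\alpha,\gamma)\in r,(\gamma,\beta)\in s\}|$ is independent of $(\alpha,\beta)\in t$. Relations are unions of elements of $S$; fibers are sets $\Gamma$ with $1_\Gamma\in S$. $\mathcal X\le\mathcal X'$ if every relation of $\mathcal X$ is a relation of $\mathcal X'$ (fission). Complete: all basic relations singletons. For $\Pi\subseteq2^\Omega$, the $\Pi$-fission is the smallest fission in which each member of $\Pi$ is a union of fibers; $\Pi$ is a generalized base if its $\Pi$-fission is complete. For an equivalence relation $e$ that is a relation of $\mathcal X$ and a class $\Delta$ of $e$, the restriction is $\mathcal X_\Delta=(\Delta,\{s\cap\Delta^2:s\in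 S\}\setminus\{\emptyset\})$, and the quotient $\mathcal X_{\Omega/e}$ is the coherent configuration on $\Omega/e$ with basic relations $\{(\Gamma,\Delta): s\cap(\Gamma\times\Delta)\ne\emptyset\}$, $s\in S$ (nonempty ones). The wreath product $\mathcal X_1\wr\mathcal X_2$ is the smallest coherent configuration $\mathcal X$ on $\Omega_1\times\Omega_2$ such that the equivalence relation $e$ with classes $\Omega_a=\Omega_1\times\{a\}$, $a\in\Omega_2$, is a relation of $\mathcal X$, each restriction $\mathcal X_{\Omega_a}$ is the image of $\mathcal X_1$ under $x\mapsto(x,a)$, and $\mathcal X_{\Omega/e}$ is the image of $\mathcal X_2$ under $a\mapsto\Omega_a$. *)

theory Defs
  imports Main
begin

definition coherent_config :: "'a set \<Rightarrow> ('a \<times> 'a) set set \<Rightarrow> bool" where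
"coherent_config \<Omega> S \<longleftrightarrow>
   finite \<Omega> \<and> (\<forall>s\<in>S. s \<noteq> {}) \<and> \<Union>S = \<Omega> \<times> \<Omega> \<and>
   (\<forall>s\<in>S. \<forall>t\<in>S. s \<noteq> t \<longrightarrow> s \<inter> t = {}) \<and>
   (\<exists>T\<subseteq>S. \<Union>T = Id_on \<Omega>) \<and>
   (\<forall>s\<in>S. converse s \<in> S) \<and>
   (\<forall>r\<in>S. \<forall>s\<in>S. \<forall>t\<in>S. \<forall>p\<in>t. \<forall>q\<in>t.
      card {\<gamma>. (fst p, \<gamma>) \<in> r \<and> (\<gamma>, snd p) \<in> s} =
      card {\<gamma>. (fst q, \<gamma>) \<in> r \<and> (\<gamma>, snd q) \<in> s})"

definition cc_rels :: "('a \<times> 'a) set set \<Rightarrow> ('a \<times> 'a) set set" where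
"cc_rels S = {\<Union>T | T. T \<subseteq> S}"

text \<open>S' is a fission of S (same point set understood).\<close>
definition fission :: "('a \<times> 'a) set set \<Rightarrow> ('a \<times> 'a) set set \<Rightarrow> bool" where
"fission S S' \<longleftrightarrow> cc_rels S \<subseteq> cc_rels S'"

definition fibers :: "('a \<times> 'a) set set \<Rightarrow> 'a set set" where
"fibers S = {\<Gamma>. Id_on \<Gamma> \<in> S}"

definition union_of_fibers :: "('a \<times> 'a) set set \<Rightarrow> 'a set \<Rightarrow> bool" where
"union_of_fibers S \<Delta> \<longleftrightarrow> (\<exists>F\<subseteq>fibers S. \<Delta> = \<Union>F)"

definition complete_cc :: "('a \<times> 'a) set set \<Rightarrow> bool" where
"complete_cc S \<longleftrightarrow> (\<forall>s\<in>S. \<exists>p. s = {p})"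

definition is_Pi_fission ::
  "'a set \<Rightarrow> ('a \<times> 'a) set set \<Rightarrow> 'a set set \<Rightarrow> ('a \<times> 'a) set set \<Rightarrow> bool" where
"is_Pi_fission \<Omega> S \<Pi> S' \<longleftrightarrow>
   coherent_config \<Omega> S' \<and> fission S S' \<and> (\<forall>\<Delta>\<in>\<Pi>. union_of_fibers S' \<Delta>) \<and>
   (\<forall>S''. coherent_config \<Omega> S'' \<and> fission S S'' \<and> (\<forall>\<Delta>\<in>\<Pi>. union_of_fibers S'' \<Delta>)
          \<longrightarrow> fission S' S'')"

definition gen_base :: "'a set \<Rightarrow> ('a \<times> 'a) set set \<Rightarrow> 'a set set \<Rightarrow> bool" where
"gen_base \<Omega> S \<Pi> \<longleftrightarrow> (\<exists>S'. is_Pi_fission \<Omega> S \<Pi> S' \<and> complete_cc S')"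

definition restr :: "('a \<times> 'a) set set \<Rightarrow> 'a set \<Rightarrow> ('a \<times> 'a) set set" where
"restr S \<Delta> = {s \<inter> (\<Delta> \<times> \<Delta>) | s. s \<in> S} - {{}}"

definition quot :: "'a set \<Rightarrow> ('a \<times> 'a) set \<Rightarrow> ('a \<times> 'a) set set \<Rightarrow> ('a set \<times> 'a set) set set" where
"quot \<Omega> e S = {{(\<Gamma>, \<Delta>). \<Gamma> \<in> \<Omega> // e \<and> \<Delta> \<in> \<Omega> // e \<and> s \<inter> (\<Gamma> \<times> \<Delta>) \<noteq> {}} | s. s \<in> S} - {{}}"

definition rel_image :: "('a \<Rightarrow> 'b) \<Rightarrow> ('a \<times> 'a) set set \<Rightarrow> ('b \<times> 'b) set set" where
"rel_image f S = {map_prod f f ` s | s. s \<in> S}"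

definition wr_eq :: "'a set \<Rightarrow> 'b set \<Rightarrow> (('a \<times> 'b) \<times> ('a \<times> 'b)) set" where
"wr_eq \<Omega>1 \<Omega>2 = {(x, y). x \<in> \<Omega>1 \<times> \<Omega>2 \<and> y \<in> \<Omega>1 \<times> \<Omega>2 \<and> snd x = snd y}"

definition wr_cond ::
  "'a set \<Rightarrow> ('a \<times> 'a) set set \<Rightarrow> 'b set \<Rightarrow> ('b \<times> 'b) set set
     \<Rightarrow> (('a \<times> 'b) \<times> ('a \<times> 'b)) set set \<Rightarrow> bool" where
"wr_cond \<Omega>1 S1 \<Omega>2 S2 S \<longleftrightarrow>
   coherent_config (\<Omega>1 \<times> \<Omega>2) S \<and>
   wr_eq \<Omega>1 \<Omega>2 \<in> cc_rels S \<and>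
   (\<forall>a\<in>\<Omega>2. restr S (\<Omega>1 \<times> {a}) = rel_image (\<lambda>x. (x, a)) S1) \<and>
   quot (\<Omega>1 \<times> \<Omega>2) (wr_eq \<Omega>1 \<Omega>2) S = rel_image (\<lambda>a. \<Omega>1 \<times> {a}) S2"

definition is_wreath ::
  "'a set \<Rightarrow> ('a \<times> 'a) set set \<Rightarrow> 'b set \<Rightarrow> ('b \<times> 'b) set set
     \<Rightarrow> (('a \<times> 'b) \<times> ('a \<times> 'b)) set set \<Rightarrow> bool" where
"is_wreath \<Omega>1 S1 \<Omega>2 S2 S \<longleftrightarrow>
   wr_cond \<Omega>1 S1 \<Omega>2 S2 S \<and> (\<forall>S'. wr_cond \<Omega>1 S1 \<Omega>2 S2 S' \<longrightarrow> fission S S')"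

end

theory Submission
  imports Defs
begin

text \<open>It suffices to show that every coherent fission \<open>S''\<close> of the wreath product in which
  each member of \<open>\<Pi>\<close> is a union of fibers is complete.  Restricted to a block
  \<open>\<Omega>\<^sub>1 \<times> {a}\<close>, \<open>S''\<close> is such a fission for \<open>\<Pi>\<^sub>a\<close>, hence complete by (1); so every fiber of \<open>S''\<close>
  meets every block in at most one point.  As the block equivalence is a relation of \<open>S''\<close>,
  the projections of the fibers partition \<open>\<Omega>\<^sub>2\<close>; one fiber from each class gives a union of
  fibers on which the projection is injective, and transporting \<open>S''\<close> restricted to it yields a
  coherent fission of \<open>S\<^sub>2\<close> in which every \<open>\<pi>(\<Gamma>)\<close> is a union of fibers.  By (2) it is complete,
  so every fiber of \<open>S''\<close> projects to a point, is therefore a singleton, and then every basic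
  relation of \<open>S''\<close> is a singleton.\<close>

section \<open>Basic properties of coherent configurations\<close>

lemma coherent_configI:
  assumes "finite \<Omega>" "\<forall>s\<in>S. s \<noteq> {}" "\<Union>S = \<Omega> \<times> \<Omega>"
    "\<forall>s\<in>S. \<forall>t\<in>S. s \<noteq> t \<longrightarrow> s \<inter> t = {}" "\<exists>T\<subseteq>S. \<Union>T = Id_on \<Omega>"
    "\<forall>s\<in>S. converse s \<in> S"
    "\<And>r s t p q. r \<in> S \<Longrightarrow> s \<in> S \<Longrightarrow> t \<in> S \<Longrightarrow> p \<in> t \<Longrightarrow> q \<in> t \<Longrightarrow>
      card {\<gamma>. (fst p, \<gamma>) \<in> r \<and> (\<gamma>, snd p) \<in> s} = card {\<gamma>. (fst q, \<gamma>) \<in> r \<and> (\<gamma>, snd q) \<in> s}"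
  shows "coherent_config \<Omega> S"
proof -
  have "\<forall>r\<in>S. \<forall>s\<in>S. \<forall>t\<in>S. \<forall>p\<in>t. \<forall>q\<in>t.
      card {\<gamma>. (fst p, \<gamma>) \<in> r \<and> (\<gamma>, snd p) \<in> s} = card {\<gamma>. (fst q, \<gamma>) \<in> r \<and> (\<gamma>, snd q) \<in> s}"
    using assms(7) by blast
  with assms(1-6) show ?thesis unfolding coherent_config_def by (intro conjI)
qed

lemma cc_relsI: "T \<subseteq> S \<Longrightarrow> X = \<Union>T \<Longrightarrow> X \<in> cc_rels S"
  unfolding cc_rels_def by blast

context
  fixes \<Omega> :: "'a set" and S :: "('a \<times> 'a) set set"
  assumes cc: "coherent_config \<Omega> S"
begin

lemma cc_finite: "finite \<Omega>"
  using cc unfolding coherent_config_def by (elim conjE)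

lemma cc_Union: "\<Union>S = \<Omega> \<times> \<Omega>"
  using cc unfolding coherent_config_def by (elim conjE)

lemma cc_diagonal: "\<exists>T\<subseteq>S. \<Union>T = Id_on \<Omega>"
  using cc unfolding coherent_config_def by (elim conjE)

lemma cc_nonempty: "s \<in> S \<Longrightarrow> s \<noteq> {}"
proof -
  have "\<forall>s\<in>S. s \<noteq> {}" using cc unfolding coherent_config_def by (elim conjE)
  then show "s \<in> S \<Longrightarrow> s \<noteq> {}" by blast
qed

lemma cc_unique: "s \<in> S \<Longrightarrow> t \<in> S \<Longrightarrow> p \<in> s \<Longrightarrow> p \<in> t \<Longrightarrow> s = t"
proof -
  have "\<forall>s\<in>S. \<forall>t\<in>S. s \<noteq> t \<longrightarrow> s \<inter> t = {}" using cc unfolding coherent_config_def by (elim conjE)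
  then show "s \<in> S \<Longrightarrow> t \<in> S \<Longrightarrow> p \<in> s \<Longrightarrow> p \<in> t \<Longrightarrow> s = t" by blast
qed

lemma cc_converse: "s \<in> S \<Longrightarrow> converse s \<in> S"
proof -
  have "\<forall>s\<in>S. converse s \<in> S" using cc unfolding coherent_config_def by (elim conjE)
  then show "s \<in> S \<Longrightarrow> converse s \<in> S" by blast
qed

lemma cc_card_eq:
  assumes "r \<in> S" "s \<in> S" "t \<in> S" "p \<in> t" "q \<in> t"
  shows "card {\<gamma>. (fst p, \<gamma>) \<in> r \<and> (\<gamma>, snd p) \<in> s} = card {\<gamma>. (fst q, \<gamma>) \<in> r \<and> (\<gamma>, snd q) \<in> s}"
proof -
  have "\<forall>r\<in>S. \<forall>s\<in>S. \<forall>t\<in>S. \<forall>p\<in>t. \<forall>q\<in>t.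
      card {\<gamma>. (fst p, \<gamma>) \<in> r \<and> (\<gamma>, snd p) \<in> s} = card {\<gamma>. (fst q, \<gamma>) \<in> r \<and> (\<gamma>, snd q) \<in> s}"
    using cc unfolding coherent_config_def by (elim conjE)
  then show ?thesis using assms by blast
qed

lemma cc_subset: "s \<in> S \<Longrightarrow> s \<subseteq> \<Omega> \<times> \<Omega>"
  using cc_Union by blast

lemma cc_covers: "p \<in> \<Omega> \<times> \<Omega> \<Longrightarrow> \<exists>s\<in>S. p \<in> s"
  using cc_Union by blast

lemma basic_subset_rel: "u \<in> cc_rels S \<Longrightarrow> s \<in> S \<Longrightarrow> p \<in> s \<Longrightarrow> p \<in> u \<Longrightarrow> s \<subseteq> u"
  unfolding cc_rels_def using cc_unique by blast

lemma cc_relsI_saturated: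
  assumes L: "L \<subseteq> \<Omega> \<times> \<Omega>" and sat: "\<And>s. s \<in> S \<Longrightarrow> s \<inter> L \<noteq> {} \<Longrightarrow> s \<subseteq> L"
  shows "L \<in> cc_rels S"
proof (rule cc_relsI[of "{s \<in> S. s \<subseteq> L}"])
  show "L = \<Union>{s \<in> S. s \<subseteq> L}"
  proof
    show "L \<subseteq> \<Union>{s \<in> S. s \<subseteq> L}"
    proof
      fix p assume p: "p \<in> L"
      then obtain s where s: "s \<in> S" "p \<in> s" using L cc_covers by blast
      then have "s \<subseteq> L" using sat p by blast
      then show "p \<in> \<Union>{s \<in> S. s \<subseteq> L}" using s by blast
    qed
  qed blast
qed blast

text \<open>Both \<open>(x, y)\<close> and \<open>(x', y')\<close> lie in \<open>s\<close>, so they are joined by equally many paths through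
  \<open>Id_on G\<close> followed by \<open>s\<close>; for \<open>(x, y)\<close> there is exactly one.\<close>
lemma fst_in_fiber:
  assumes s: "s \<in> S" "(x, y) \<in> s" "(x', y') \<in> s" and G: "G \<in> fibers S" "x \<in> G"
  shows "x' \<in> G"
proof -
  have IG: "Id_on G \<in> S" using G(1) unfolding fibers_def by simp
  have "{\<gamma>. (x, \<gamma>) \<in> Id_on G \<and> (\<gamma>, y) \<in> s} = {x}" using s(2) G(2) by (auto simp: Id_on_iff)
  then have "card {\<gamma>. (x', \<gamma>) \<in> Id_on G \<and> (\<gamma>, y') \<in> s} = 1"
    using cc_card_eq[OF IG s(1) s(1) s(2) s(3)] by simp
  then have "{\<gamma>. (x', \<gamma>) \<in> Id_on G \<and> (\<gamma>, y') \<in> s} \<noteq> {}" by (metis card.empty zero_neq_one)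
  then show ?thesis by auto
qed

lemma snd_in_fiber:
  assumes "s \<in> S" "(x, y) \<in> s" "(x', y') \<in> s" and "G \<in> fibers S" "y \<in> G"
  shows "y' \<in> G"
  using fst_in_fiber[of "converse s" y x y' x' G] cc_converse assms by simp

lemma fiber_exists: "x \<in> \<Omega> \<Longrightarrow> \<exists>G\<in>fibers S. x \<in> G"
proof -
  assume x: "x \<in> \<Omega>"
  obtain T where T: "T \<subseteq> S" "\<Union>T = Id_on \<Omega>" using cc_diagonal by blast
  then obtain s where s: "s \<in> T" "(x, x) \<in> s" using x by blast
  have diag: "s \<subseteq> Id_on \<Omega>" using s T by blast
  have "s = Id_on (fst ` s)"
  proof (intro set_eqI iffI)
    fix p assume p: "p \<in> s"
    then obtain a where "p = (a, a)" using diag by blast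
    then show "p \<in> Id_on (fst ` s)" using p by force
  next
    fix p assume "p \<in> Id_on (fst ` s)"
    then obtain a where a: "p = (a, a)" "a \<in> fst ` s" by blast
    then obtain q where q: "q \<in> s" "fst q = a" by blast
    then have "q = (a, a)" using diag by (cases q) auto
    then show "p \<in> s" using a q by simp
  qed
  then have "Id_on (fst ` s) \<in> S" using s T by auto
  then have "fst ` s \<in> fibers S" unfolding fibers_def by simp
  moreover have "x \<in> fst ` s" using s(2) by force
  ultimately show ?thesis by blast
qed

lemma fiber_subset: "G \<in> fibers S \<Longrightarrow> G \<subseteq> \<Omega>"
  unfolding fibers_def using cc_subset by blast

text \<open>The out-valency of \<open>x\<close> in \<open>r\<close> is the intersection number of \<open>r\<close> and \<open>r\<inverse>\<close> at \<open>(x, x)\<close>,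
  hence constant on the fiber of \<open>x\<close>.\<close>
lemma out_neighbour_exists:
  assumes r: "r \<in> S" "(x, y) \<in> r" and G: "G \<in> fibers S" "x \<in> G" "x' \<in> G"
  shows "\<exists>z. (x', z) \<in> r"
proof -
  have IG: "Id_on G \<in> S" using G(1) unfolding fibers_def by simp
  have "card {\<gamma>. (x, \<gamma>) \<in> r} = card {\<gamma>. (x', \<gamma>) \<in> r}"
    using cc_card_eq[OF r(1) cc_converse[OF r(1)] IG, of "(x, x)" "(x', x')"] G by (simp add: Id_onI)
  moreover have "finite {\<gamma>. (x, \<gamma>) \<in> r}"
    using cc_finite cc_subset[OF r(1)] by (auto intro: finite_subset)
  moreover have "{\<gamma>. (x, \<gamma>) \<in> r} \<noteq> {}" using r(2) by blast
  ultimately have "{\<gamma>. (x', \<gamma>) \<in> r} \<noteq> {}" by (metis card.empty card_0_eq)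
  then show ?thesis by blast
qed

lemma basic_subset_union_fibers:
  assumes F: "F \<subseteq> fibers S" and s: "s \<in> S" "p \<in> s" "p \<in> \<Union>F \<times> \<Union>F"
  shows "s \<subseteq> \<Union>F \<times> \<Union>F"
proof
  fix q assume "q \<in> s"
  obtain x y u v where pq: "p = (x, y)" "q = (u, v)" by (cases p, cases q)
  obtain G H where GH: "G \<in> F" "x \<in> G" "H \<in> F" "y \<in> H" using s(3) pq(1) by blast
  have "u \<in> G" using fst_in_fiber[of s x y u v G] s GH F pq \<open>q \<in> s\<close> by blast
  moreover have "v \<in> H" using snd_in_fiber[of s x y u v H] s GH F pq \<open>q \<in> s\<close> by blast
  ultimately show "q \<in> \<Union>F \<times> \<Union>F" using GH pq(2) by blast
qed

end

lemma cc_rels_subset: "coherent_config \<Omega> S \<Longrightarrow> u \<in> cc_rels S \<Longrightarrow> u \<subseteq> \<Omega> \<times> \<Omega>"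
  unfolding cc_rels_def using cc_subset by blast

lemma fission_mono: "S \<subseteq> S' \<Longrightarrow> fission S S'"
  unfolding fission_def cc_rels_def by blast

lemma fissionI:
  assumes cc: "coherent_config \<Omega> T" and basic: "\<And>s. s \<in> S \<Longrightarrow> s \<in> cc_rels T"
  shows "fission S T"
  unfolding fission_def
proof
  fix Z assume "Z \<in> cc_rels S"
  then obtain U where U: "U \<subseteq> S" "Z = \<Union>U" unfolding cc_rels_def by blast
  have rels: "u \<in> cc_rels T" if "u \<in> U" for u using that U(1) basic by blast
  show "Z \<in> cc_rels T"
  proof (rule cc_relsI_saturated[OF cc])
    show "Z \<subseteq> \<Omega> \<times> \<Omega>" using U(2) rels cc_rels_subset[OF cc] by blast
  next
    fix t assume t: "t \<in> T" "t \<inter> Z \<noteq> {}"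
    then obtain p u where "p \<in> t" "u \<in> U" "p \<in> u" using U(2) by blast
    then have "t \<subseteq> u" using basic_subset_rel[OF cc rels t(1)] by blast
    then show "t \<subseteq> Z" using \<open>u \<in> U\<close> U(2) by blast
  qed
qed

section \<open>Complete configurations and generalized bases\<close>

definition complete_config :: "'a set \<Rightarrow> ('a \<times> 'a) set set" where
  "complete_config \<Omega> = (\<lambda>p. {p}) ` (\<Omega> \<times> \<Omega>)"

lemma coherent_config_complete_config:
  assumes "finite \<Omega>"
  shows "coherent_config \<Omega> (complete_config \<Omega>)"
proof (rule coherent_configI)
  show "\<exists>T\<subseteq>complete_config \<Omega>. \<Union>T = Id_on \<Omega>"
    by (rule exI[of _ "(\<lambda>x. {(x, x)}) ` \<Omega>"]) (auto simp: complete_config_def)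
  show "\<forall>s\<in>complete_config \<Omega>. converse s \<in> complete_config \<Omega>"
    by (auto simp: complete_config_def)
  fix r s t p q assume "t \<in> complete_config \<Omega>" "p \<in> t" "q \<in> t"
  then have "p = q" by (auto simp: complete_config_def)
  then show "card {\<gamma>. (fst p, \<gamma>) \<in> r \<and> (\<gamma>, snd p) \<in> s} = card {\<gamma>. (fst q, \<gamma>) \<in> r \<and> (\<gamma>, snd q) \<in> s}"
    by simp
qed (use assms in \<open>auto simp: complete_config_def\<close>)

lemma complete_cc_complete_config: "complete_cc (complete_config \<Omega>)"
  unfolding complete_cc_def complete_config_def by blast

lemma fission_complete_config: "coherent_config \<Omega> S \<Longrightarrow> fission S (complete_config \<Omega>)"
proof (unfold fission_def, rule subsetI)
  fix Z assume "coherent_config \<Omega> S" "Z \<in> cc_rels S"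
  then have "Z \<subseteq> \<Omega> \<times> \<Omega>" by (rule cc_rels_subset)
  then have "(\<lambda>p. {p}) ` Z \<subseteq> complete_config \<Omega>" unfolding complete_config_def by (rule image_mono)
  then show "Z \<in> cc_rels (complete_config \<Omega>)" by (intro cc_relsI[of "(\<lambda>p. {p}) ` Z"]) auto
qed

lemma union_of_fibers_complete_config: "\<Delta> \<subseteq> \<Omega> \<Longrightarrow> union_of_fibers (complete_config \<Omega>) \<Delta>"
  unfolding union_of_fibers_def
proof (intro exI conjI)
  assume "\<Delta> \<subseteq> \<Omega>"
  then show "(\<lambda>x. {x}) ` \<Delta> \<subseteq> fibers (complete_config \<Omega>)"
    unfolding fibers_def complete_config_def by (auto simp: Id_on_def)
qed blast

lemma complete_config_subset:
  assumes cc: "coherent_config \<Omega> S" and "complete_cc S"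
  shows "complete_config \<Omega> \<subseteq> S"
proof (unfold complete_config_def, rule image_subsetI)
  fix p assume "p \<in> \<Omega> \<times> \<Omega>"
  then obtain s where s: "s \<in> S" "p \<in> s" using cc_covers[OF cc] by blast
  then obtain q where "s = {q}" using \<open>complete_cc S\<close> unfolding complete_cc_def by blast
  then show "{p} \<in> S" using s by simp
qed

lemma gen_baseI:
  assumes cc: "coherent_config \<Omega> S" and \<Pi>: "\<Pi> \<subseteq> Pow \<Omega>"
    and complete: "\<And>S''. coherent_config \<Omega> S'' \<Longrightarrow> fission S S'' \<Longrightarrow>
      \<forall>\<Delta>\<in>\<Pi>. union_of_fibers S'' \<Delta> \<Longrightarrow> complete_cc S''"
  shows "gen_base \<Omega> S \<Pi>"
  unfolding gen_base_def is_Pi_fission_def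
proof (intro exI conjI allI impI)
  show "coherent_config \<Omega> (complete_config \<Omega>)"
    using coherent_config_complete_config cc_finite[OF cc] by blast
  show "fission S (complete_config \<Omega>)" using fission_complete_config[OF cc] .
  show "\<forall>\<Delta>\<in>\<Pi>. union_of_fibers (complete_config \<Omega>) \<Delta>"
    using \<Pi> union_of_fibers_complete_config by blast
  show "complete_cc (complete_config \<Omega>)" by (rule complete_cc_complete_config)
  fix S'' assume "coherent_config \<Omega> S'' \<and> fission S S'' \<and> (\<forall>\<Delta>\<in>\<Pi>. union_of_fibers S'' \<Delta>)"
  then have "coherent_config \<Omega> S''" "complete_cc S''" using complete by blast+
  then show "fission (complete_config \<Omega>) S''" by (intro fission_mono complete_config_subset)
qed

lemma gen_base_complete_cc:
  assumes base: "gen_base \<Omega> S \<Pi>" and cc'': "coherent_config \<Omega> S''" and "fission S S''"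
    and "\<forall>\<Delta>\<in>\<Pi>. union_of_fibers S'' \<Delta>"
  shows "complete_cc S''"
  unfolding complete_cc_def
proof
  obtain S' where S': "is_Pi_fission \<Omega> S \<Pi> S'" "complete_cc S'"
    using base unfolding gen_base_def by blast
  have cc': "coherent_config \<Omega> S'" and "fission S' S''"
    using S'(1) assms(2-4) unfolding is_Pi_fission_def by (blast, blast)
  fix s assume s: "s \<in> S''"
  then obtain p where p: "p \<in> s" using cc_nonempty[OF cc''] by blast
  then have "p \<in> \<Omega> \<times> \<Omega>" using cc_subset[OF cc'' s] by blast
  then have "{p} \<in> S'" using complete_config_subset[OF cc' S'(2)] unfolding complete_config_def by blast
  then have "{p} \<in> cc_rels S'" by (intro cc_relsI[of "{{p}}"]) auto
  then have "{p} \<in> cc_rels S''" using \<open>fission S' S''\<close> unfolding fission_def by blast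
  then obtain U where U: "U \<subseteq> S''" "{p} = \<Union>U" unfolding cc_rels_def by blast
  then obtain u where "u \<in> U" "p \<in> u" by blast
  moreover have "u = {p}" using calculation U(2) by blast
  ultimately have "s = {p}" using cc_unique[OF cc'' s] U(1) p by blast
  then show "\<exists>p. s = {p}" ..
qed

lemma complete_cc_fiber_singleton: "complete_cc S \<Longrightarrow> G \<in> fibers S \<Longrightarrow> \<exists>a. G = {a}"
proof -
  assume "complete_cc S" "G \<in> fibers S"
  then obtain p where p: "Id_on G = {p}" unfolding complete_cc_def fibers_def by blast
  then obtain a where a: "p = (a, a)" "a \<in> G" by blast
  have "x = a" if "x \<in> G" for x
    using p a Id_onI[OF that] by simp
  then show ?thesis using a(2) by blast
qed

lemma complete_ccI_fibers:
  assumes cc: "coherent_config \<Omega> S" and fib: "\<And>G. G \<in> fibers S \<Longrightarrow> \<exists>a. G = {a}"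
  shows "complete_cc S"
  unfolding complete_cc_def
proof
  fix s assume s: "s \<in> S"
  then obtain x y where xy: "(x, y) \<in> s" using cc_nonempty[OF cc] by fast
  then have "x \<in> \<Omega>" "y \<in> \<Omega>" using cc_subset[OF cc s] by blast+
  then obtain G H where G: "G \<in> fibers S" "x \<in> G" and H: "H \<in> fibers S" "y \<in> H"
    using fiber_exists[OF cc] by blast
  have "G = {x}" "H = {y}" using fib G H by blast+
  have "s \<subseteq> {(x, y)}"
  proof
    fix p assume "p \<in> s"
    moreover obtain u v where uv: "p = (u, v)" by (cases p)
    ultimately have "u \<in> G" "v \<in> H"
      using fst_in_fiber[OF cc s xy _ G] snd_in_fiber[OF cc s xy _ H] by blast+
    then show "p \<in> {(x, y)}" using uv \<open>G = {x}\<close> \<open>H = {y}\<close> by simp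
  qed
  then show "\<exists>p. s = {p}" using xy by blast
qed

section \<open>Restriction to a class of an equivalence relation\<close>

lemma path_set_restr:
  assumes cc: "coherent_config \<Omega> S" and eq: "equiv \<Omega> e" and e: "e \<in> cc_rels S" and D: "D \<in> \<Omega> // e"
    and r: "r \<in> S" "r \<inter> (D \<times> D) \<noteq> {}" and xy: "x \<in> D" "y \<in> D"
  shows "{\<gamma>. (x, \<gamma>) \<in> r \<inter> (D \<times> D) \<and> (\<gamma>, y) \<in> s \<inter> (D \<times> D)} = {\<gamma>. (x, \<gamma>) \<in> r \<and> (\<gamma>, y) \<in> s}"
proof -
  have "D \<times> D \<subseteq> e" using quotient_eq_iff[OF eq D D] by blast
  moreover obtain z where "z \<in> r" "z \<in> D \<times> D" using r(2) by blast
  ultimately have "r \<subseteq> e" using basic_subset_rel[OF cc e r(1)] by blast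
  then have "\<gamma> \<in> D" if "(x, \<gamma>) \<in> r" for \<gamma>
    using in_quotient_imp_closed[OF eq D xy(1)] that by blast
  then show ?thesis using xy by auto
qed

lemma coherent_config_restr:
  assumes cc: "coherent_config \<Omega> S" and eq: "equiv \<Omega> e" and e: "e \<in> cc_rels S" and D: "D \<in> \<Omega> // e"
  shows "coherent_config D (restr S D)"
proof (rule coherent_configI)
  have D\<Omega>: "D \<subseteq> \<Omega>" using eq D by (rule in_quotient_imp_subset)
  show "finite D" using D\<Omega> cc_finite[OF cc] by (rule finite_subset)
  show "\<forall>s\<in>restr S D. s \<noteq> {}" unfolding restr_def by blast
  show "\<forall>s\<in>restr S D. \<forall>t\<in>restr S D. s \<noteq> t \<longrightarrow> s \<inter> t = {}"
    unfolding restr_def using cc_unique[OF cc] by blast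
  show "\<forall>s\<in>restr S D. converse s \<in> restr S D"
    unfolding restr_def using cc_converse[OF cc] by blast
  show "\<Union>(restr S D) = D \<times> D"
  proof
    show "D \<times> D \<subseteq> \<Union>(restr S D)"
    proof
      fix p assume p: "p \<in> D \<times> D"
      then obtain s where "s \<in> S" "p \<in> s" using cc_covers[OF cc] D\<Omega> by blast
      then show "p \<in> \<Union>(restr S D)" using p unfolding restr_def by blast
    qed
  qed (auto simp: restr_def)
  obtain T where T: "T \<subseteq> S" "\<Union>T = Id_on \<Omega>" using cc_diagonal[OF cc] by blast
  show "\<exists>T'\<subseteq>restr S D. \<Union>T' = Id_on D"
  proof (intro exI conjI)
    show "(\<lambda>t. t \<inter> (D \<times> D)) ` T - {{}} \<subseteq> restr S D" using T(1) unfolding restr_def by blast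
    have "\<Union>((\<lambda>t. t \<inter> (D \<times> D)) ` T - {{}}) = \<Union>T \<inter> (D \<times> D)" by auto
    also have "\<dots> = Id_on D" using T(2) D\<Omega> by auto
    finally show "\<Union>((\<lambda>t. t \<inter> (D \<times> D)) ` T - {{}}) = Id_on D" .
  qed
next
  fix r' s' t' p q assume r': "r' \<in> restr S D" and s': "s' \<in> restr S D" and t': "t' \<in> restr S D"
    and pq: "p \<in> t'" "q \<in> t'"
  obtain r where r: "r \<in> S" "r' = r \<inter> (D \<times> D)" "r' \<noteq> {}" using r' unfolding restr_def by blast
  obtain s where s: "s \<in> S" "s' = s \<inter> (D \<times> D)" using s' unfolding restr_def by blast
  obtain t where t: "t \<in> S" "t' = t \<inter> (D \<times> D)" using t' unfolding restr_def by blast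
  have same: "{\<gamma>. (fst z, \<gamma>) \<in> r' \<and> (\<gamma>, snd z) \<in> s'} = {\<gamma>. (fst z, \<gamma>) \<in> r \<and> (\<gamma>, snd z) \<in> s}"
    if "z \<in> t'" for z
    using path_set_restr[OF cc eq e D r(1), of "fst z" "snd z" s] r(2,3) s(2) that t(2) by auto
  show "card {\<gamma>. (fst p, \<gamma>) \<in> r' \<and> (\<gamma>, snd p) \<in> s'} = card {\<gamma>. (fst q, \<gamma>) \<in> r' \<and> (\<gamma>, snd q) \<in> s'}"
    unfolding same[OF pq(1)] same[OF pq(2)]
    using cc_card_eq[OF cc r(1) s(1) t(1), of p q] pq t(2) by simp
qed

lemma cc_rels_restr: "Y \<in> cc_rels S \<Longrightarrow> Y \<inter> (D \<times> D) \<in> cc_rels (restr S D)"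
proof -
  assume "Y \<in> cc_rels S"
  then obtain T where T: "T \<subseteq> S" "Y = \<Union>T" unfolding cc_rels_def by blast
  have "{t \<inter> (D \<times> D) |t. t \<in> T} - {{}} \<subseteq> restr S D" using T unfolding restr_def by blast
  moreover have "Y \<inter> (D \<times> D) = \<Union>({t \<inter> (D \<times> D) |t. t \<in> T} - {{}})" using T(2) by blast
  ultimately show ?thesis by (rule cc_relsI)
qed

lemma cc_rels_restrE:
  assumes "X \<in> cc_rels (restr S D)"
  obtains Y where "Y \<in> cc_rels S" "X = Y \<inter> (D \<times> D)"
proof -
  obtain T where T: "T \<subseteq> restr S D" "X = \<Union>T" using assms unfolding cc_rels_def by blast
  let ?Y = "\<Union>{s \<in> S. s \<inter> (D \<times> D) \<in> T}"
  have "?Y \<in> cc_rels S" unfolding cc_rels_def by blast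
  moreover have "X = ?Y \<inter> (D \<times> D)"
  proof
    show "X \<subseteq> ?Y \<inter> (D \<times> D)" using T unfolding restr_def by blast
    show "?Y \<inter> (D \<times> D) \<subseteq> X" using T by blast
  qed
  ultimately show ?thesis by (rule that)
qed

lemma fission_restr:
  assumes "fission S S''"
  shows "fission (restr S D) (restr S'' D)"
  unfolding fission_def
proof
  fix X assume "X \<in> cc_rels (restr S D)"
  then obtain Y where "Y \<in> cc_rels S" "X = Y \<inter> (D \<times> D)" by (rule cc_rels_restrE)
  then show "X \<in> cc_rels (restr S'' D)" using assms cc_rels_restr unfolding fission_def by blast
qed

lemma union_of_fibers_restr:
  assumes "union_of_fibers S \<Delta>"
  shows "union_of_fibers (restr S D) (\<Delta> \<inter> D)"
proof -
  obtain F where F: "F \<subseteq> fibers S" "\<Delta> = \<Union>F" using assms unfolding union_of_fibers_def by blast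
  let ?F = "{G \<inter> D | G. G \<in> F} - {{}}"
  have "?F \<subseteq> fibers (restr S D)"
  proof
    fix H assume "H \<in> ?F"
    then obtain G where G: "G \<in> F" "H = G \<inter> D" "H \<noteq> {}" by blast
    have "Id_on H = Id_on G \<inter> (D \<times> D)" using G by (auto simp: Id_on_def)
    moreover have "Id_on G \<in> S" using G F unfolding fibers_def by blast
    moreover have "Id_on H \<noteq> {}" using G by auto
    ultimately show "H \<in> fibers (restr S D)" unfolding fibers_def restr_def by blast
  qed
  moreover have "\<Delta> \<inter> D = \<Union>?F" using F by auto
  ultimately show ?thesis unfolding union_of_fibers_def by blast
qed

lemma complete_restr_fiber_inj:
  assumes complete: "complete_cc (restr S D)" and G: "G \<in> fibers S"
    and u: "u \<in> G" "u \<in> D" and v: "v \<in> G" "v \<in> D"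
  shows "u = v"
proof -
  have "Id_on G \<in> S" using G unfolding fibers_def by simp
  moreover have uu: "(u, u) \<in> Id_on G \<inter> (D \<times> D)" using u by blast
  ultimately have "Id_on G \<inter> (D \<times> D) \<in> restr S D" unfolding restr_def by blast
  then obtain p where p: "Id_on G \<inter> (D \<times> D) = {p}" using complete unfolding complete_cc_def by blast
  have "(v, v) \<in> Id_on G \<inter> (D \<times> D)" using v by blast
  then show ?thesis using uu unfolding p by auto
qed

lemma gen_base_restr_complete_cc:
  assumes cc: "coherent_config \<Omega> S''" and eq: "equiv \<Omega> e" and e: "e \<in> cc_rels S''"
    and D: "D \<in> \<Omega> // e" and fis: "fission S S''" and uof: "\<forall>\<Gamma>\<in>\<Pi>. union_of_fibers S'' \<Gamma>"
    and base: "gen_base D (restr S D) ((\<lambda>\<Gamma>. \<Gamma> \<inter> D) ` \<Pi>)"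
  shows "complete_cc (restr S'' D)"
proof (rule gen_base_complete_cc[OF base coherent_config_restr[OF cc eq e D] fission_restr[OF fis]])
  show "\<forall>\<Delta>\<in>(\<lambda>\<Gamma>. \<Gamma> \<inter> D) ` \<Pi>. union_of_fibers (restr S'' D) \<Delta>"
  proof
    fix \<Delta> assume "\<Delta> \<in> (\<lambda>\<Gamma>. \<Gamma> \<inter> D) ` \<Pi>"
    then obtain \<Gamma> where "\<Gamma> \<in> \<Pi>" "\<Delta> = \<Gamma> \<inter> D" by blast
    then show "union_of_fibers (restr S'' D) \<Delta>" using uof union_of_fibers_restr[of S'' \<Gamma> D] by simp
  qed
qed

section \<open>Quotient modulo the kernel of a map\<close>

lemma coherent_config_union_fibers:
  assumes cc: "coherent_config \<Omega> S" and F: "F \<subseteq> fibers S"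
  shows "coherent_config (\<Union>F) {s \<in> S. s \<subseteq> \<Union>F \<times> \<Union>F}"
proof (rule coherent_configI)
  let ?X = "\<Union>F"
  have X\<Omega>: "?X \<subseteq> \<Omega>" using F fiber_subset[OF cc] by blast
  note inside = basic_subset_union_fibers[OF cc F]
  show "finite ?X" using X\<Omega> cc_finite[OF cc] by (rule finite_subset)
  show "\<forall>s\<in>{s \<in> S. s \<subseteq> ?X \<times> ?X}. s \<noteq> {}" using cc_nonempty[OF cc] by blast
  show "\<forall>s\<in>{s \<in> S. s \<subseteq> ?X \<times> ?X}. \<forall>t\<in>{s \<in> S. s \<subseteq> ?X \<times> ?X}. s \<noteq> t \<longrightarrow> s \<inter> t = {}"
    using cc_unique[OF cc] by blast
  show "\<forall>s\<in>{s \<in> S. s \<subseteq> ?X \<times> ?X}. converse s \<in> {s \<in> S. s \<subseteq> ?X \<times> ?X}"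
    using cc_converse[OF cc] by blast
  show "\<Union>{s \<in> S. s \<subseteq> ?X \<times> ?X} = ?X \<times> ?X"
  proof
    show "?X \<times> ?X \<subseteq> \<Union>{s \<in> S. s \<subseteq> ?X \<times> ?X}"
    proof
      fix p assume p: "p \<in> ?X \<times> ?X"
      then obtain s where s: "s \<in> S" "p \<in> s" using cc_covers[OF cc] X\<Omega> by blast
      then show "p \<in> \<Union>{s \<in> S. s \<subseteq> ?X \<times> ?X}" using inside p by blast
    qed
  qed blast
  show "\<exists>T\<subseteq>{s \<in> S. s \<subseteq> ?X \<times> ?X}. \<Union>T = Id_on ?X"
  proof (intro exI conjI)
    show "Id_on ` F \<subseteq> {s \<in> S. s \<subseteq> ?X \<times> ?X}" using F unfolding fibers_def by blast
  qed blast
next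
  fix r s t p q assume "r \<in> {s \<in> S. s \<subseteq> \<Union>F \<times> \<Union>F}" "s \<in> {s \<in> S. s \<subseteq> \<Union>F \<times> \<Union>F}"
    "t \<in> {s \<in> S. s \<subseteq> \<Union>F \<times> \<Union>F}" "p \<in> t" "q \<in> t"
  then show "card {\<gamma>. (fst p, \<gamma>) \<in> r \<and> (\<gamma>, snd p) \<in> s} = card {\<gamma>. (fst q, \<gamma>) \<in> r \<and> (\<gamma>, snd q) \<in> s}"
    by (intro cc_card_eq[OF cc]) simp_all
qed

lemma path_set_rel_image:
  assumes inj: "inj_on f X" and rs: "r \<subseteq> X \<times> X" "s \<subseteq> X \<times> X" and xy: "x \<in> X" "y \<in> X"
  shows "{\<gamma>. (f x, \<gamma>) \<in> map_prod f f ` r \<and> (\<gamma>, f y) \<in> map_prod f f ` s}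
    = f ` {\<gamma>. (x, \<gamma>) \<in> r \<and> (\<gamma>, y) \<in> s}"
proof
  show "{\<gamma>. (f x, \<gamma>) \<in> map_prod f f ` r \<and> (\<gamma>, f y) \<in> map_prod f f ` s} \<subseteq> f ` {\<gamma>. (x, \<gamma>) \<in> r \<and> (\<gamma>, y) \<in> s}"
  proof
    fix c assume "c \<in> {\<gamma>. (f x, \<gamma>) \<in> map_prod f f ` r \<and> (\<gamma>, f y) \<in> map_prod f f ` s}"
    then obtain a b a' b' where ab: "(a, b) \<in> r" "f a = f x" "f b = c" "(a', b') \<in> s" "f a' = c" "f b' = f y"
      by auto
    have "a \<in> X" "b \<in> X" "a' \<in> X" "b' \<in> X" using rs ab by auto
    then have "a = x" "b' = y" "a' = b" using inj ab xy unfolding inj_on_def by metis+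
    then show "c \<in> f ` {\<gamma>. (x, \<gamma>) \<in> r \<and> (\<gamma>, y) \<in> s}" using ab by auto
  qed
qed force

lemma card_path_set_rel_image:
  assumes cc: "coherent_config X S" and inj: "inj_on f X"
    and r: "r \<in> S" and s: "s \<in> S" and xy: "x \<in> X" "y \<in> X"
  shows "card {\<gamma>. (f x, \<gamma>) \<in> map_prod f f ` r \<and> (\<gamma>, f y) \<in> map_prod f f ` s}
    = card {\<gamma>. (x, \<gamma>) \<in> r \<and> (\<gamma>, y) \<in> s}"
proof -
  have "inj_on f {\<gamma>. (x, \<gamma>) \<in> r \<and> (\<gamma>, y) \<in> s}"
    by (rule inj_on_subset[OF inj]) (use cc_subset[OF cc r] in blast)
  then show ?thesis
    using path_set_rel_image[OF inj cc_subset[OF cc r] cc_subset[OF cc s] xy] by (simp add: card_image)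
qed

lemma coherent_config_rel_image:
  assumes cc: "coherent_config X S" and inj: "inj_on f X"
  shows "coherent_config (f ` X) (rel_image f S)"
proof (rule coherent_configI)
  let ?g = "map_prod f f"
  have injg: "inj_on ?g (X \<times> X)" using inj by (auto simp: inj_on_def)
  show "finite (f ` X)" using cc_finite[OF cc] by blast
  show "\<forall>s\<in>rel_image f S. s \<noteq> {}" using cc_nonempty[OF cc] unfolding rel_image_def by blast
  have "\<Union>(rel_image f S) = ?g ` \<Union>S" unfolding rel_image_def by blast
  then show "\<Union>(rel_image f S) = f ` X \<times> f ` X" using cc_Union[OF cc] by auto
  show "\<forall>s\<in>rel_image f S. \<forall>t\<in>rel_image f S. s \<noteq> t \<longrightarrow> s \<inter> t = {}"
  proof (intro ballI impI)
    fix s' t' assume "s' \<in> rel_image f S" "t' \<in> rel_image f S" "s' \<noteq> t'"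
    then obtain s t where st: "s \<in> S" "t \<in> S" "s' = ?g ` s" "t' = ?g ` t" "s \<noteq> t"
      unfolding rel_image_def by blast
    then have "s \<inter> t = {}" using cc_unique[OF cc] by blast
    then show "s' \<inter> t' = {}"
      using inj_on_image_Int[OF injg cc_subset[OF cc st(1)] cc_subset[OF cc st(2)]] st(3,4) by simp
  qed
  show "\<forall>s\<in>rel_image f S. converse s \<in> rel_image f S"
  proof
    fix s' assume "s' \<in> rel_image f S"
    then obtain s where s: "s \<in> S" "s' = ?g ` s" unfolding rel_image_def by blast
    then have "converse s' = ?g ` converse s" by auto
    then show "converse s' \<in> rel_image f S" using cc_converse[OF cc s(1)] unfolding rel_image_def by blast
  qed
  obtain T where T: "T \<subseteq> S" "\<Union>T = Id_on X" using cc_diagonal[OF cc] by blast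
  have "\<Union>((\<lambda>t. ?g ` t) ` T) = ?g ` Id_on X" using T(2) by blast
  also have "\<dots> = Id_on (f ` X)" by (auto simp: Id_on_def)
  finally have "\<Union>((\<lambda>t. ?g ` t) ` T) = Id_on (f ` X)" .
  moreover have "(\<lambda>t. ?g ` t) ` T \<subseteq> rel_image f S" using T(1) unfolding rel_image_def by blast
  ultimately show "\<exists>T'\<subseteq>rel_image f S. \<Union>T' = Id_on (f ` X)" by blast
next
  let ?g = "map_prod f f"
  fix r' s' t' p q assume "r' \<in> rel_image f S" "s' \<in> rel_image f S" "t' \<in> rel_image f S"
    and pq: "p \<in> t'" "q \<in> t'"
  then obtain r s t where rst: "r \<in> S" "s \<in> S" "t \<in> S" "r' = ?g ` r" "s' = ?g ` s" "t' = ?g ` t"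
    unfolding rel_image_def by blast
  have count: "card {\<gamma>. (fst (?g z), \<gamma>) \<in> r' \<and> (\<gamma>, snd (?g z)) \<in> s'}
      = card {\<gamma>. (fst z, \<gamma>) \<in> r \<and> (\<gamma>, snd z) \<in> s}" if "z \<in> t" for z
    using card_path_set_rel_image[OF cc inj rst(1,2), of "fst z" "snd z"] cc_subset[OF cc rst(3)] that rst(4,5)
    by (cases z) auto
  obtain zp where zp: "p = ?g zp" "zp \<in> t" using pq(1) unfolding rst(6) by (rule imageE)
  obtain zq where zq: "q = ?g zq" "zq \<in> t" using pq(2) unfolding rst(6) by (rule imageE)
  show "card {\<gamma>. (fst p, \<gamma>) \<in> r' \<and> (\<gamma>, snd p) \<in> s'} = card {\<gamma>. (fst q, \<gamma>) \<in> r' \<and> (\<gamma>, snd q) \<in> s'}"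
    using count[OF zp(2)] count[OF zq(2)] cc_card_eq[OF cc rst(1-3) zp(2) zq(2)] unfolding zp(1) zq(1)
    by simp
qed

lemma fiber_image_eq:
  assumes cc: "coherent_config \<Omega> S"
    and ker: "{(x, y). x \<in> \<Omega> \<and> y \<in> \<Omega> \<and> f x = f y} \<in> cc_rels S"
    and G: "G \<in> fibers S" "u \<in> G" and H: "H \<in> fibers S" "v \<in> H" and uv: "f u = f v"
  shows "f ` G = f ` H"
proof -
  have sub: "f ` G \<subseteq> f ` H"
    if G: "G \<in> fibers S" "u \<in> G" and H: "H \<in> fibers S" "v \<in> H" and uv: "f u = f v" for G H u v
  proof
    fix a assume "a \<in> f ` G"
    then obtain w where w: "w \<in> G" "a = f w" by blast
    have uv\<Omega>: "u \<in> \<Omega>" "v \<in> \<Omega>" using fiber_subset[OF cc] G H by blast+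
    then obtain r where r: "r \<in> S" "(u, v) \<in> r" using cc_covers[OF cc] by blast
    have "(u, v) \<in> {(x, y). x \<in> \<Omega> \<and> y \<in> \<Omega> \<and> f x = f y}" using uv\<Omega> uv by blast
    then have r_ker: "r \<subseteq> {(x, y). x \<in> \<Omega> \<and> y \<in> \<Omega> \<and> f x = f y}"
      using basic_subset_rel[OF cc ker r] by blast
    obtain z where z: "(w, z) \<in> r" using out_neighbour_exists[OF cc r G(1,2) w(1)] by blast
    have "z \<in> H" using snd_in_fiber[OF cc r z H] .
    moreover have "f w = f z" using r_ker z by blast
    ultimately show "a \<in> f ` H" using w(2) by blast
  qed
  show ?thesis using sub[OF G H uv] sub[OF H G uv[symmetric]] by (rule equalityI)
qed

lemma fiber_transversal:
  assumes cc: "coherent_config \<Omega> S"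
    and ker: "{(x, y). x \<in> \<Omega> \<and> y \<in> \<Omega> \<and> f x = f y} \<in> cc_rels S"
    and inj: "\<forall>G\<in>fibers S. inj_on f G"
  obtains R where "R \<subseteq> fibers S" "inj_on f (\<Union>R)" "f ` \<Union>R = f ` \<Omega>"
    "\<And>G. G \<in> fibers S \<Longrightarrow> \<exists>H\<in>R. f ` H = f ` G"
proof -
  define \<rho> where "\<rho> G = (SOME H. H \<in> fibers S \<and> f ` H = f ` G)" for G
  have \<rho>: "\<rho> G \<in> fibers S \<and> f ` \<rho> G = f ` G" if "G \<in> fibers S" for G
    unfolding \<rho>_def by (rule someI[of _ G]) (use that in simp)
  define R where "R = \<rho> ` fibers S"
  have RF: "R \<subseteq> fibers S" unfolding R_def using \<rho> by blast
  have "inj_on f (\<Union>R)"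
  proof (rule inj_onI)
    fix x1 x2 assume "x1 \<in> \<Union>R" "x2 \<in> \<Union>R" and eq: "f x1 = f x2"
    then obtain G1 G2 where G: "G1 \<in> fibers S" "x1 \<in> \<rho> G1" "G2 \<in> fibers S" "x2 \<in> \<rho> G2"
      unfolding R_def by blast
    have "f ` \<rho> G1 = f ` \<rho> G2"
      using fiber_image_eq[OF cc ker _ G(2) _ G(4) eq] \<rho>[OF G(1)] \<rho>[OF G(3)] by blast
    then have "f ` G1 = f ` G2" using \<rho>[OF G(1)] \<rho>[OF G(3)] by simp
    then have "\<rho> G1 = \<rho> G2" unfolding \<rho>_def by (rule arg_cong)
    then have "x1 \<in> \<rho> G1" "x2 \<in> \<rho> G1" "\<rho> G1 \<in> fibers S" using G \<rho>[OF G(1)] by simp_all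
    then show "x1 = x2" using inj eq unfolding inj_on_def by blast
  qed
  moreover have "f ` \<Union>R = f ` \<Omega>"
  proof
    show "f ` \<Union>R \<subseteq> f ` \<Omega>" using RF fiber_subset[OF cc] by blast
    show "f ` \<Omega> \<subseteq> f ` \<Union>R"
    proof
      fix a assume "a \<in> f ` \<Omega>"
      then obtain x where x: "x \<in> \<Omega>" "a = f x" by blast
      then obtain G where "G \<in> fibers S" "x \<in> G" using fiber_exists[OF cc] by blast
      then have "a \<in> f ` \<rho> G" "\<rho> G \<in> R" using \<rho> x(2) unfolding R_def by blast+
      then show "a \<in> f ` \<Union>R" by blast
    qed
  qed
  moreover have "\<exists>H\<in>R. f ` H = f ` G" if "G \<in> fibers S" for G
    using \<rho>[OF that] that unfolding R_def by blast
  ultimately show ?thesis by (rule that[OF RF])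
qed

lemma cc_rels_rel_image_pullback:
  assumes cc: "coherent_config \<Omega> S" and F: "F \<subseteq> fibers S" and img: "f ` \<Union>F = f ` \<Omega>"
    and s: "s \<subseteq> f ` \<Omega> \<times> f ` \<Omega>" and L: "{(x, y). x \<in> \<Omega> \<and> y \<in> \<Omega> \<and> (f x, f y) \<in> s} \<in> cc_rels S"
  shows "s \<in> cc_rels (rel_image f {t \<in> S. t \<subseteq> \<Union>F \<times> \<Union>F})"
proof -
  obtain U where U: "U \<subseteq> S" "{(x, y). x \<in> \<Omega> \<and> y \<in> \<Omega> \<and> (f x, f y) \<in> s} = \<Union>U"
    using L unfolding cc_rels_def by blast
  have F\<Omega>: "\<Union>F \<subseteq> \<Omega>" using F fiber_subset[OF cc] by blast
  let ?W = "(\<lambda>u. map_prod f f ` u) ` {u \<in> U. u \<subseteq> \<Union>F \<times> \<Union>F}"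
  show ?thesis
  proof (rule cc_relsI)
    show "?W \<subseteq> rel_image f {t \<in> S. t \<subseteq> \<Union>F \<times> \<Union>F}" using U(1) unfolding rel_image_def by blast
    show "s = \<Union>?W"
    proof
      show "s \<subseteq> \<Union>?W"
      proof
        fix p assume p: "p \<in> s"
        then obtain x y where xy: "x \<in> \<Union>F" "y \<in> \<Union>F" "p = (f x, f y)" using s img by blast
        then have "(x, y) \<in> \<Union>U" using U(2) F\<Omega> p by blast
        then obtain u where u: "u \<in> U" "(x, y) \<in> u" by blast
        then have "u \<subseteq> \<Union>F \<times> \<Union>F"
          using basic_subset_union_fibers[OF cc F, of u "(x, y)"] U(1) xy(1,2) by blast
        then show "p \<in> \<Union>?W" using u xy(3) by blast
      qed
      show "\<Union>?W \<subseteq> s" using U(2) by blast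
    qed
  qed
qed

text \<open>The configuration \<open>T\<close> stands for the quotient of \<open>S\<close> modulo the kernel of \<open>f\<close>: it is the image
  under \<open>f\<close> of the restriction of \<open>S\<close> to a union of fibers meeting every kernel class once.\<close>
lemma quotient_config_exists:
  assumes cc: "coherent_config \<Omega> S"
    and ker: "{(x, y). x \<in> \<Omega> \<and> y \<in> \<Omega> \<and> f x = f y} \<in> cc_rels S"
    and inj: "\<forall>G\<in>fibers S. inj_on f G"
  obtains T where "coherent_config (f ` \<Omega>) T"
    and "\<And>G. G \<in> fibers S \<Longrightarrow> f ` G \<in> fibers T"
    and "\<And>s. s \<subseteq> f ` \<Omega> \<times> f ` \<Omega> \<Longrightarrow>
      {(x, y). x \<in> \<Omega> \<and> y \<in> \<Omega> \<and> (f x, f y) \<in> s} \<in> cc_rels S \<Longrightarrow> s \<in> cc_rels T"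
proof -
  obtain R where R: "R \<subseteq> fibers S" "inj_on f (\<Union>R)" "f ` \<Union>R = f ` \<Omega>"
    "\<And>G. G \<in> fibers S \<Longrightarrow> \<exists>H\<in>R. f ` H = f ` G"
    using fiber_transversal[OF cc ker inj] by blast
  define T where "T = rel_image f {s \<in> S. s \<subseteq> \<Union>R \<times> \<Union>R}"
  have "coherent_config (f ` \<Omega>) T"
    using coherent_config_rel_image[OF coherent_config_union_fibers[OF cc R(1)] R(2)] R(3)
    unfolding T_def by simp
  moreover have "f ` G \<in> fibers T" if G: "G \<in> fibers S" for G
  proof -
    obtain H where H: "H \<in> R" "f ` H = f ` G" using R(4)[OF G] by blast
    then have "Id_on H \<in> {s \<in> S. s \<subseteq> \<Union>R \<times> \<Union>R}" using R(1) unfolding fibers_def by blast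
    then have "map_prod f f ` Id_on H \<in> T" unfolding T_def rel_image_def by blast
    moreover have "map_prod f f ` Id_on H = Id_on (f ` H)" by (auto simp: Id_on_def)
    ultimately show ?thesis using H(2) unfolding fibers_def by simp
  qed
  moreover note cc_rels_rel_image_pullback[OF cc R(1) R(3)]
  ultimately show ?thesis using that unfolding T_def by blast
qed

lemma union_of_fibers_image:
  assumes "union_of_fibers S \<Delta>" and fib: "\<And>G. G \<in> fibers S \<Longrightarrow> f ` G \<in> fibers T"
  shows "union_of_fibers T (f ` \<Delta>)"
proof -
  obtain F where F: "F \<subseteq> fibers S" "\<Delta> = \<Union>F" using assms(1) unfolding union_of_fibers_def by blast
  have "(\<lambda>G. f ` G) ` F \<subseteq> fibers T" using F(1) fib by blast
  moreover have "f ` \<Delta> = \<Union>((\<lambda>G. f ` G) ` F)" unfolding F(2) by (rule image_Union)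
  ultimately show ?thesis unfolding union_of_fibers_def by blast
qed

lemma inj_on_image_singleton: "inj_on f A \<Longrightarrow> f ` A = {b} \<Longrightarrow> \<exists>a. A = {a}"
proof -
  assume inj: "inj_on f A" and b: "f ` A = {b}"
  then obtain a where a: "a \<in> A" by blast
  have "x = a" if "x \<in> A" for x
  proof -
    have "f x \<in> f ` A" "f a \<in> f ` A" using a that by simp_all
    then have "f x = f a" unfolding b by simp
    then show "x = a" using inj a that unfolding inj_on_def by blast
  qed
  then show ?thesis using a by blast
qed

section \<open>Wreath products\<close>

lemma equiv_wr_eq: "equiv (\<Omega>1 \<times> \<Omega>2) (wr_eq \<Omega>1 \<Omega>2)"
  unfolding wr_eq_def by (rule equivI) (auto simp: refl_on_def sym_def trans_def)

lemma wr_eq_block_in_quotient: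
  assumes "a \<in> \<Omega>2" and "\<Omega>1 \<noteq> {}"
  shows "\<Omega>1 \<times> {a} \<in> (\<Omega>1 \<times> \<Omega>2) // wr_eq \<Omega>1 \<Omega>2"
proof -
  obtain x where x: "x \<in> \<Omega>1" using assms(2) by blast
  then have "\<Omega>1 \<times> {a} = wr_eq \<Omega>1 \<Omega>2 `` {(x, a)}" using assms(1) unfolding wr_eq_def by auto
  then show ?thesis using x assms(1) by (simp add: quotientI)
qed

lemma fiber_inj_on_snd:
  assumes cc: "coherent_config (\<Omega>1 \<times> \<Omega>2) S"
    and blocks: "\<forall>a\<in>\<Omega>2. complete_cc (restr S (\<Omega>1 \<times> {a}))"
    and G: "G \<in> fibers S"
  shows "inj_on snd G"
proof (rule inj_onI)
  fix u v assume uv: "u \<in> G" "v \<in> G" "snd u = snd v"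
  then have "u \<in> \<Omega>1 \<times> \<Omega>2" "v \<in> \<Omega>1 \<times> \<Omega>2" using fiber_subset[OF cc G] by blast+
  then have a: "snd u \<in> \<Omega>2" and u: "u \<in> \<Omega>1 \<times> {snd u}" and v: "v \<in> \<Omega>1 \<times> {snd u}"
    using uv(3) by (auto simp: mem_Times_iff)
  show "u = v" by (rule complete_restr_fiber_inj[OF blocks[rule_format, OF a] G uv(1) u uv(2) v])
qed

lemma wreath_basic_rel_snd:
  assumes wc: "wr_cond \<Omega>1 S1 \<Omega>2 S2 S" and ne: "\<Omega>1 \<noteq> {}"
    and s: "s \<in> S" "(x, y) \<in> s" "(x', y') \<in> s"
  obtains s2 where "s2 \<in> S2" "(snd x, snd y) \<in> s2" "(snd x', snd y') \<in> s2"
proof -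
  let ?\<Omega> = "\<Omega>1 \<times> \<Omega>2" and ?e = "wr_eq \<Omega>1 \<Omega>2"
  define B :: "'b \<Rightarrow> ('a \<times> 'b) set" where "B = (\<lambda>a. \<Omega>1 \<times> {a})"
  define q where "q = {(\<Gamma>, \<Delta>). \<Gamma> \<in> ?\<Omega> // ?e \<and> \<Delta> \<in> ?\<Omega> // ?e \<and> s \<inter> (\<Gamma> \<times> \<Delta>) \<noteq> {}}"
  have cc: "coherent_config ?\<Omega> S" using wc unfolding wr_cond_def by blast
  have quot: "quot ?\<Omega> ?e S = rel_image B S2" using wc unfolding wr_cond_def B_def by blast
  have B_inj: "a = b" if "B a = B b" for a b using that ne unfolding B_def by blast
  have in_q: "(B (snd u), B (snd v)) \<in> q" if "(u, v) \<in> s" for u v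
  proof -
    have "u \<in> ?\<Omega>" "v \<in> ?\<Omega>" using cc_subset[OF cc s(1)] that by auto
    then have "B (snd u) \<in> ?\<Omega> // ?e" "B (snd v) \<in> ?\<Omega> // ?e"
      unfolding B_def using wr_eq_block_in_quotient[OF _ ne] by (auto simp: mem_Times_iff)
    moreover have "(u, v) \<in> s \<inter> (B (snd u) \<times> B (snd v))"
      using that \<open>u \<in> ?\<Omega>\<close> \<open>v \<in> ?\<Omega>\<close> unfolding B_def by (auto simp: mem_Times_iff)
    ultimately show ?thesis unfolding q_def by blast
  qed
  have "q \<in> quot ?\<Omega> ?e S"
    unfolding quot_def q_def using s(1) in_q[OF s(2)] unfolding q_def by blast
  then obtain s2 where s2: "s2 \<in> S2" "q = map_prod B B ` s2" unfolding quot rel_image_def by blast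
  have "(snd u, snd v) \<in> s2" if uv: "(u, v) \<in> s" for u v
  proof -
    obtain c where c: "(B (snd u), B (snd v)) = map_prod B B c" "c \<in> s2"
      using in_q[OF uv] unfolding s2(2) by (rule imageE)
    obtain a b where ab: "c = (a, b)" by (cases c)
    then have "B (snd u) = B a" "B (snd v) = B b" using c(1) by simp_all
    then have "snd u = a" "snd v = b" using B_inj by blast+
    then show ?thesis using ab c(2) by simp
  qed
  then show ?thesis using that s2(1) s(2,3) by blast
qed

lemma wreath_pullback_rel:
  assumes wc: "wr_cond \<Omega>1 S1 \<Omega>2 S2 S" and ne: "\<Omega>1 \<noteq> {}"
    and cc2: "coherent_config \<Omega>2 S2" and s2: "s2 \<in> S2"
  shows "{(x, y). x \<in> \<Omega>1 \<times> \<Omega>2 \<and> y \<in> \<Omega>1 \<times> \<Omega>2 \<and> (snd x, snd y) \<in> s2} \<in> cc_rels S"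
proof -
  have cc: "coherent_config (\<Omega>1 \<times> \<Omega>2) S" using wc unfolding wr_cond_def by blast
  show ?thesis
  proof (rule cc_relsI_saturated[OF cc])
    fix s assume s: "s \<in> S" "s \<inter> {(x, y). x \<in> \<Omega>1 \<times> \<Omega>2 \<and> y \<in> \<Omega>1 \<times> \<Omega>2 \<and> (snd x, snd y) \<in> s2} \<noteq> {}"
    then obtain x y where xy: "(x, y) \<in> s" "(snd x, snd y) \<in> s2" by blast
    show "s \<subseteq> {(x, y). x \<in> \<Omega>1 \<times> \<Omega>2 \<and> y \<in> \<Omega>1 \<times> \<Omega>2 \<and> (snd x, snd y) \<in> s2}"
    proof
      fix p assume p: "p \<in> s"
      obtain x' y' where p': "p = (x', y')" by (cases p)
      obtain t2 where t2: "t2 \<in> S2" "(snd x, snd y) \<in> t2" "(snd x', snd y') \<in> t2"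
        using wreath_basic_rel_snd[OF wc ne s(1) xy(1)] p p' by blast
      then have "t2 = s2" using cc_unique[OF cc2 _ s2] xy(2) by blast
      moreover have "x' \<in> \<Omega>1 \<times> \<Omega>2" "y' \<in> \<Omega>1 \<times> \<Omega>2" using cc_subset[OF cc s(1)] p p' by auto
      ultimately show "p \<in> {(x, y). x \<in> \<Omega>1 \<times> \<Omega>2 \<and> y \<in> \<Omega>1 \<times> \<Omega>2 \<and> (snd x, snd y) \<in> s2}"
        using t2(3) p' by simp
    qed
  qed blast
qed

lemma wreath_fission_fiber_snd_singleton:
  assumes wc: "wr_cond \<Omega>1 S1 \<Omega>2 S2 S" and cc2: "coherent_config \<Omega>2 S2" and ne: "\<Omega>1 \<noteq> {}"
    and cc'': "coherent_config (\<Omega>1 \<times> \<Omega>2) S''" and fis: "fission S S''"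
    and inj: "\<forall>G\<in>fibers S''. inj_on snd G" and uof: "\<forall>\<Gamma>\<in>\<Pi>. union_of_fibers S'' \<Gamma>"
    and base: "gen_base \<Omega>2 S2 ((\<lambda>\<Gamma>. snd ` \<Gamma>) ` \<Pi>)" and G: "G \<in> fibers S''"
  obtains a where "snd ` G = {a}"
proof -
  have e'': "wr_eq \<Omega>1 \<Omega>2 \<in> cc_rels S''" using wc fis unfolding wr_cond_def fission_def by blast
  have snd_\<Omega>: "snd ` (\<Omega>1 \<times> \<Omega>2) = \<Omega>2" using ne by auto
  obtain T where T: "coherent_config \<Omega>2 T" "\<And>G. G \<in> fibers S'' \<Longrightarrow> snd ` G \<in> fibers T"
    and pullback: "\<And>s. s \<subseteq> \<Omega>2 \<times> \<Omega>2 \<Longrightarrow>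
      {(x, y). x \<in> \<Omega>1 \<times> \<Omega>2 \<and> y \<in> \<Omega>1 \<times> \<Omega>2 \<and> (snd x, snd y) \<in> s} \<in> cc_rels S'' \<Longrightarrow> s \<in> cc_rels T"
    by (rule quotient_config_exists[OF cc'' e''[unfolded wr_eq_def] inj, unfolded snd_\<Omega>]) (rule that)
  have "fission S2 T"
  proof (rule fissionI[OF T(1)])
    fix s2 assume s2: "s2 \<in> S2"
    have "{(x, y). x \<in> \<Omega>1 \<times> \<Omega>2 \<and> y \<in> \<Omega>1 \<times> \<Omega>2 \<and> (snd x, snd y) \<in> s2} \<in> cc_rels S''"
      using wreath_pullback_rel[OF wc ne cc2 s2] fis unfolding fission_def by blast
    then show "s2 \<in> cc_rels T" by (rule pullback[OF cc_subset[OF cc2 s2]])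
  qed
  moreover have "\<forall>\<Delta>\<in>(\<lambda>\<Gamma>. snd ` \<Gamma>) ` \<Pi>. union_of_fibers T \<Delta>"
    using uof union_of_fibers_image[OF _ T(2)] by blast
  ultimately have "complete_cc T" by (rule gen_base_complete_cc[OF base T(1)])
  then obtain a where "snd ` G = {a}" using complete_cc_fiber_singleton T(2)[OF G] by blast
  then show ?thesis by (rule that)
qed

lemma wreath_fission_complete:
  assumes wc: "wr_cond \<Omega>1 S1 \<Omega>2 S2 S" and cc2: "coherent_config \<Omega>2 S2"
    and blocks: "\<forall>a\<in>\<Omega>2. gen_base (\<Omega>1 \<times> {a}) (restr S (\<Omega>1 \<times> {a})) ((\<lambda>\<Gamma>. \<Gamma> \<inter> (\<Omega>1 \<times> {a})) ` \<Pi>)"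
    and base: "gen_base \<Omega>2 S2 ((\<lambda>\<Gamma>. snd ` \<Gamma>) ` \<Pi>)"
    and cc'': "coherent_config (\<Omega>1 \<times> \<Omega>2) S''" and fis: "fission S S''"
    and uof: "\<forall>\<Delta>\<in>\<Pi>. union_of_fibers S'' \<Delta>"
  shows "complete_cc S''"
proof (cases "\<Omega>1 = {}")
  case True
  then have "S'' = {}" using cc_subset[OF cc''] cc_nonempty[OF cc''] by blast
  then show ?thesis unfolding complete_cc_def by blast
next
  case False
  have e'': "wr_eq \<Omega>1 \<Omega>2 \<in> cc_rels S''" using wc fis unfolding wr_cond_def fission_def by blast
  have "\<forall>a\<in>\<Omega>2. complete_cc (restr S'' (\<Omega>1 \<times> {a}))"
  proof
    fix a assume a: "a \<in> \<Omega>2"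
    show "complete_cc (restr S'' (\<Omega>1 \<times> {a}))"
      using gen_base_restr_complete_cc[OF cc'' equiv_wr_eq e'' wr_eq_block_in_quotient[OF a False] fis uof]
        blocks a by blast
  qed
  then have inj: "\<forall>G\<in>fibers S''. inj_on snd G" using fiber_inj_on_snd[OF cc''] by blast
  show ?thesis
  proof (rule complete_ccI_fibers[OF cc''])
    fix G assume G: "G \<in> fibers S''"
    obtain a where "snd ` G = {a}"
      by (rule wreath_fission_fiber_snd_singleton[OF wc cc2 False cc'' fis inj uof base G])
    then show "\<exists>x. G = {x}" by (rule inj_on_image_singleton[OF inj[rule_format, OF G]])
  qed
qed

theorem lemma5p1:
  fixes \<Omega>1 :: "'a set" and S1 :: "('a \<times> 'a) set set"
    and \<Omega>2 :: "'b set" and S2 :: "('b \<times> 'b) set set"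
    and S :: "(('a \<times> 'b) \<times> ('a \<times> 'b)) set set"
    and \<Pi> :: "('a \<times> 'b) set set"
  assumes "coherent_config \<Omega>1 S1"
    and "coherent_config \<Omega>2 S2"
    and "is_wreath \<Omega>1 S1 \<Omega>2 S2 S"
    and "\<Pi> \<subseteq> Pow (\<Omega>1 \<times> \<Omega>2)"
    and "\<forall>a\<in>\<Omega>2. gen_base (\<Omega>1 \<times> {a}) (restr S (\<Omega>1 \<times> {a})) ((\<lambda>\<Gamma>. \<Gamma> \<inter> (\<Omega>1 \<times> {a})) ` \<Pi>)"
    and "gen_base \<Omega>2 S2 ((\<lambda>\<Gamma>. snd ` \<Gamma>) ` \<Pi>)"
  shows "gen_base (\<Omega>1 \<times> \<Omega>2) S \<Pi>"
proof -
  have wc: "wr_cond \<Omega>1 S1 \<Omega>2 S2 S" using assms(3) unfolding is_wreath_def by blast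
  then have cc: "coherent_config (\<Omega>1 \<times> \<Omega>2) S" unfolding wr_cond_def by blast
  show ?thesis
    by (rule gen_baseI[OF cc assms(4)]) (rule wreath_fission_complete[OF wc assms(2) assms(5) assms(6)])
qed

end
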